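(* For every $n\in\mathbb{N}$ and every $m\in\{0,1,\dots,n\}$, \[ \sum_{j=0}^{n}\sum_{i=0}^{j}\frac{\binom{2n+2}{i}}{\binom{2n-m}{j}}=2^{m-1}(2n+1-m)\left(H_n+\frac{2^{2n+1}}{(n+1)\binom{2n+1}{n+1}}+\sum_{k=1}^{m}\frac{1}{2^{k-1}k}\left(\frac{\frac{2^{2n+2}k}{2n+2-k}-\binom{2n+2}{n+1}}{2\binom{2n+1-k}{n+1}}+1\right)\right). \]
   Context: $H_n=\sum_{k=1}^{n}\frac1k$ is the $n$-th harmonic number ($H_0=0$). Empty sums are $0$. *)

theory Defs
  imports "HOL-Analysis.Analysis"
begin

end

theory Submission
  imports Defs
begin

text \<open>
  Write \<open>A\<^sub>a(j)\<close> for the partial row sum \<open>\<Sum>i\<le>j. C(a,i)\<close> and \<open>R(u,a,M)\<close> for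
  \<open>\<Sum>j\<le>u. A\<^sub>a(j) / C(M,j)\<close> (\<open>choose_prefix\<close> and \<open>prefix_ratio_sum\<close> below), so the
  left-hand side is \<open>R(n, 2n+2, 2n-m)\<close>. The identity
  \<open>1/C(M,j) = (M+1)/(M+2) (1/C(M+1,j) + 1/C(M+1,j+1))\<close> and a summation by parts express
  \<open>R(u,a,M)\<close> through \<open>R(u,a,M+1)\<close>, \<open>A\<^sub>a(u+1)\<close> and the single sum
  \<open>\<Sum>j\<le>u+1. C(a,j)/C(M+1,j)\<close>, which telescopes (and is harmonic when \<open>a = M+2\<close>).
  Lowering the denominator row from \<open>2n-m\<close> to \<open>2n-m-1\<close> contributes the \<open>(m+1)\<close>-st term of
  the sum over \<open>k\<close>, so everything reduces to \<open>m = 0\<close>. That case is an induction on \<open>n\<close>: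
  two such steps lead from \<open>R(k, 2k+2, 2k)\<close> to \<open>R(k, 2k+2, 2k+2)\<close>, and Pascal's rule
  \<open>A\<^sub>a\<^sub>+\<^sub>1(j) = 2 A\<^sub>a(j) - C(a,j)\<close>, applied twice, passes from numerator row \<open>2k+2\<close> to
  \<open>2k+4\<close>. The central values \<open>2 A\<^sub>2\<^sub>n(n) = 4\<^sup>n + C(2n,n)\<close> supply the powers of 4.
\<close>

definition choose_prefix :: "nat \<Rightarrow> nat \<Rightarrow> real" where
  "choose_prefix a j = (\<Sum>i=0..j. real (a choose i))"

definition prefix_ratio_sum :: "nat \<Rightarrow> nat \<Rightarrow> nat \<Rightarrow> real" where
  "prefix_ratio_sum u a M = (\<Sum>j=0..u. choose_prefix a j / real (M choose j))"

lemma choose_prefix_0 [simp]: "choose_prefix a 0 = 1"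
  by (simp add: choose_prefix_def)

lemma choose_prefix_Suc: "choose_prefix a (Suc j) = choose_prefix a j + real (a choose Suc j)"
  by (simp add: choose_prefix_def)

lemma choose_prefix_Suc_row: "choose_prefix (Suc a) j = 2 * choose_prefix a j - real (a choose j)"
  by (induction j) (simp_all add: choose_prefix_Suc)

lemma choose_prefix_odd_half: "choose_prefix (2*n+1) n = 4^n"
proof -
  have "(\<Sum>i=Suc n..2*n+1. (2*n+1) choose i) = (\<Sum>i=0..n. (2*n+1) choose i)"
    by (rule sum.reindex_bij_witness[of _ "\<lambda>i. 2*n+1-i" "\<lambda>i. 2*n+1-i"])
       (auto simp: binomial_symmetric[symmetric])
  moreover have "(\<Sum>i=0..2*n+1. (2*n+1) choose i) = (\<Sum>i=0..n. (2*n+1) choose i) + (\<Sum>i=Suc n..2*n+1. (2*n+1) choose i)"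
    using sum.ub_add_nat[of 0 n "\<lambda>i. (2*n+1) choose i" "n+1"] by (simp add: mult_2)
  ultimately have "2 * (\<Sum>i=0..n. (2*n+1) choose i) = 2 * 4^n"
    using choose_row_sum[of "2*n+1"] by (simp add: atLeast0AtMost power_mult)
  then show ?thesis
    unfolding choose_prefix_def by (metis nat_mult_eq_cancel1 of_nat_numeral of_nat_power of_nat_sum zero_less_numeral)
qed

lemma choose_prefix_even_half: "2 * choose_prefix (2*n) n = 4^n + real ((2*n) choose n)"
  using choose_prefix_Suc_row[of "2*n" n] choose_prefix_odd_half[of n] by simp

lemma real_choose_Suc_mult: "real (a choose Suc j) * (real j + 1) = (real a - real j) * real (a choose j)"
proof (cases "j \<le> a")
  case True
  have "real (Suc j * (a choose Suc j)) = real ((a - j) * (a choose j))"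
    using binomial_absorption[of j a] binomial_absorb_comp[of a j] by simp
  then show ?thesis using True by (simp add: algebra_simps)
qed (simp add: binomial_eq_0)

lemma real_Suc_choose_absorb_comp:
  assumes "j \<le> M"
  shows "real (Suc M choose j) * (real M + 1 - real j) = (real M + 1) * real (M choose j)"
proof -
  have "real (Suc M - j) * real (Suc M choose j) = real (Suc M) * real (M choose j)"
    using binomial_absorb_comp[of "Suc M" j] by (metis diff_Suc_1 of_nat_mult)
  then show ?thesis
    using assms by (simp add: algebra_simps)
qed

lemma inverse_choose_split:
  assumes "j \<le> M"
  shows "1 / real (M choose j) = (real M + 1) / (real M + 2) * (1 / real (Suc M choose j) + 1 / real (Suc M choose Suc j))"
proof -
  define c p q where "c = real (M choose j)" and "p = real (Suc M choose j)" and "q = real (Suc M choose Suc j)"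
  have lower: "p * (real M + 1 - real j) = (real M + 1) * c"
    using real_Suc_choose_absorb_comp[OF assms] by (simp add: p_def c_def)
  have upper: "q * (real j + 1) = (real M + 1) * c"
    using Suc_times_binomial_eq[of M j] by (simp add: q_def c_def algebra_simps flip: of_nat_mult)
  have pos: "0 < c" "0 < p" "0 < q"
    using assms by (simp_all add: c_def p_def q_def del: binomial_Suc_Suc)
  then have "(real M + 1) * c \<noteq> 0" by simp
  have "1 / p = (real M + 1 - real j) / ((real M + 1) * c)"
    using lower pos \<open>(real M + 1) * c \<noteq> 0\<close> by (simp add: field_simps)
  moreover have "1 / q = (real j + 1) / ((real M + 1) * c)"
    using upper pos \<open>(real M + 1) * c \<noteq> 0\<close> by (simp add: field_simps)
  ultimately have "1 / p + 1 / q = (real M + 2) / ((real M + 1) * c)"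
    by (simp add: add_divide_distrib[symmetric])
  then have "1 / c = (real M + 1) / (real M + 2) * (1 / p + 1 / q)"
    using pos by simp
  then show ?thesis by (simp only: c_def p_def q_def)
qed

lemma sum_choose_prefix_div_choose_Suc:
  "(\<Sum>j=0..u. choose_prefix a j / real (M choose Suc j))
     = prefix_ratio_sum u a M + choose_prefix a (Suc u) / real (M choose Suc u)
       - (\<Sum>j=0..Suc u. real (a choose j) / real (M choose j))"
  by (induction u) (simp_all add: prefix_ratio_sum_def choose_prefix_Suc add_divide_distrib)

lemma prefix_ratio_sum_Suc_denom:
  assumes "u \<le> M"
  shows "prefix_ratio_sum u a M = (real M + 1) / (real M + 2) *
    (2 * prefix_ratio_sum u a (Suc M) - (\<Sum>j=0..Suc u. real (a choose j) / real (Suc M choose j))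
     + choose_prefix a (Suc u) / real (Suc M choose Suc u))"
proof -
  have "prefix_ratio_sum u a M = (\<Sum>j=0..u. (real M + 1) / (real M + 2) *
      (choose_prefix a j / real (Suc M choose j) + choose_prefix a j / real (Suc M choose Suc j)))"
    unfolding prefix_ratio_sum_def
  proof (rule sum.cong)
    fix j assume "j \<in> {0..u}"
    with assms have "j \<le> M" by simp
    then show "choose_prefix a j / real (M choose j) = (real M + 1) / (real M + 2) *
      (choose_prefix a j / real (Suc M choose j) + choose_prefix a j / real (Suc M choose Suc j))"
      using inverse_choose_split[of j M] by (simp add: divide_inverse algebra_simps)
  qed simp
  also have "\<dots> = (real M + 1) / (real M + 2) *
      (prefix_ratio_sum u a (Suc M) + (\<Sum>j=0..u. choose_prefix a j / real (Suc M choose Suc j)))"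
    by (simp add: prefix_ratio_sum_def sum_distrib_left sum.distrib distrib_left del: binomial_Suc_Suc)
  finally show ?thesis
    unfolding sum_choose_prefix_div_choose_Suc by simp
qed

lemma choose_div_choose_Suc:
  assumes "j < M"
  shows "(real M - real j) * (real (a choose Suc j) / real (M choose Suc j))
    = (real a - real j) * (real (a choose j) / real (M choose j))"
proof -
  define p q where "p = real (a choose j)" and "q = real (M choose j)"
  have "real (a choose Suc j) = (real a - real j) * p / (real j + 1)"
    "real (M choose Suc j) = (real M - real j) * q / (real j + 1)"
    using real_choose_Suc_mult[of a j] real_choose_Suc_mult[of M j]
    by (simp_all add: p_def q_def eq_divide_eq)
  moreover have "0 < q" "0 < real M - real j"
    using assms by (simp_all add: q_def)
  ultimately show ?thesis
    by (simp add: p_def[symmetric] q_def[symmetric])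
qed

lemma sum_choose_div_choose:
  assumes "k < M"
  shows "(real M + 1 - real a) * (\<Sum>j=0..k. real (a choose j) / real (M choose j))
    = real M + 1 - (real M - real k) * (real (a choose Suc k) / real (M choose Suc k))"
  using assms
proof (induction k)
  case 0
  then show ?case by simp
next
  case (Suc k)
  define S where "S = (\<Sum>j=0..k. real (a choose j) / real (M choose j))"
  define \<rho> where "\<rho> = real (a choose Suc k) / real (M choose Suc k)"
  have IH: "(real M + 1 - real a) * S = real M + 1 - (real M - real k) * \<rho>"
    using Suc by (simp add: S_def \<rho>_def)
  have "(real M + 1 - real a) * (\<Sum>j=0..Suc k. real (a choose j) / real (M choose j))
      = (real M + 1 - real a) * (S + \<rho>)"
    by (simp add: S_def \<rho>_def)
  also have "\<dots> = real M + 1 - (real a - real (Suc k)) * \<rho>"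
    using IH by (simp add: algebra_simps)
  also have "\<dots> = real M + 1 - (real M - real (Suc k)) * (real (a choose Suc (Suc k)) / real (M choose Suc (Suc k)))"
    using choose_div_choose_Suc[OF Suc.prems, of a] by (simp add: \<rho>_def)
  finally show ?case .
qed

lemma sum_Suc_choose_div_choose:
  assumes "u \<le> M"
  shows "(\<Sum>j=0..u. real (Suc M choose j) / real (M choose j)) = (real M + 1) * (harm (Suc M) - harm (M - u))"
  using assms
proof (induction u)
  case 0
  then show ?case by (simp add: harm_Suc inverse_eq_divide)
next
  case (Suc u)
  have "real (Suc M choose Suc u) / real (M choose Suc u) = (real M + 1) / (real M - real u)"
    using real_Suc_choose_absorb_comp[OF Suc.prems] Suc.prems by (simp add: field_simps)
  moreover have "harm (M - u) = harm (M - Suc u) + 1 / (real M - real u :: real)"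
    using harm_Suc[of "M - Suc u"] Suc.prems by (simp add: Suc_diff_Suc inverse_eq_divide)
  ultimately show ?case
    using Suc by (simp add: algebra_simps)
qed

lemma prefix_ratio_sum_Suc_Suc_numer:
  assumes "u \<le> M"
  shows "prefix_ratio_sum u (Suc (Suc M)) M
    = 4 * prefix_ratio_sum u M M - 2 * (real u + 1) - (real M + 1) * (harm (Suc M) - harm (M - u))"
proof -
  have "prefix_ratio_sum u (Suc (Suc M)) M
      = (\<Sum>j=0..u. 4 * (choose_prefix M j / real (M choose j)) - 2 - real (Suc M choose j) / real (M choose j))"
    unfolding prefix_ratio_sum_def
  proof (rule sum.cong)
    fix j assume "j \<in> {0..u}"
    with assms have "0 < real (M choose j)" by simp
    then show "choose_prefix (Suc (Suc M)) j / real (M choose j)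
      = 4 * (choose_prefix M j / real (M choose j)) - 2 - real (Suc M choose j) / real (M choose j)"
      by (simp add: choose_prefix_Suc_row field_simps del: binomial_Suc_Suc)
  qed simp
  also have "\<dots> = 4 * prefix_ratio_sum u M M - 2 * (real u + 1) - (real M + 1) * (harm (Suc M) - harm (M - u))"
    using sum_Suc_choose_div_choose[OF assms]
    by (simp add: prefix_ratio_sum_def sum_subtractf sum_distrib_left del: binomial_Suc_Suc)
  finally show ?thesis .
qed

lemma central_choose_Suc: "(2*k+2) choose (k+1) = 2 * ((2*k+1) choose (k+1))"
proof -
  have "(2*k+1) choose k = (2*k+1) choose (k+1)"
    using binomial_symmetric[of k "2*k+1"] by simp
  then show ?thesis by simp
qed

lemma prefix_ratio_sum_central_Suc:
  "prefix_ratio_sum (Suc k) (2 * Suc k + 2) (2 * Suc k)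
    = (2*real k+3) / (2*real k+1) * prefix_ratio_sum k (2*k+2) (2*k)
      + (2*real k+3) / (2*real k+2) - 4^(k+1) / ((2*real k+2) * real ((2*k+2) choose (k+1)))"
proof -
  define x where "x = 2 * real k + 2"
  define C where "C = real ((2*k+2) choose (k+1))"
  define q where "q = 4^(k+1) / C"
  define A where "A = choose_prefix (2*k+2) (k+1)"
  define H h where "H = (harm k :: real)" and "h = (harm (2*k+2) :: real)"
  define R0 R1 R2 where "R0 = prefix_ratio_sum k (2*k+2) (2*k)"
    and "R1 = prefix_ratio_sum k (2*k+2) (2*k+1)" and "R2 = prefix_ratio_sum k (2*k+2) (2*k+2)"
  have "C > 0"
    by (simp add: C_def del: binomial_Suc_Suc)
  have x: "x \<noteq> 0" "x - 1 \<noteq> 0" "x + 1 \<noteq> 0"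
    by (simp_all add: x_def; linarith)+
  have "2 * A = 4^(k+1) + C"
    using choose_prefix_even_half[of "k+1"] unfolding A_def C_def by (simp add: algebra_simps)
  then have half: "A / C = (q + 1) / 2" and double: "A / (C/2) = q + 1"
    using \<open>C > 0\<close> by (simp_all add: q_def field_simps)
  have C_odd: "real ((2*k+1) choose (k+1)) = C / 2"
    using central_choose_Suc[of k] by (simp add: C_def)
  have e: "Suc (2*k) = 2*k+1" "Suc (2*k+1) = 2*k+2" "Suc (2*k+2) = 2*k+3" "Suc (2*k+3) = 2*k+4"
    "Suc k = k+1" "2*k+1 - (k+1) = k" "2*k+2 - (k+1) = k+1"
    by simp_all
  have xe: "real (2*k) + 1 = x - 1" "real (2*k) + 2 = x" "real (2*k+1) + 1 = x" "real (2*k+1) + 2 = x + 1"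
    "real (k+1) + 1 = x/2 + 1" "real (2*k+2) + 1 = x + 1"
    by (simp_all add: x_def)
  have "(\<Sum>j=0..k+1. real ((2*k+2) choose j) / real ((2*k+1) choose j)) = x * (h - H)"
    using sum_Suc_choose_div_choose[of "k+1" "2*k+1"] by (simp add: x_def h_def H_def)
  then have "R0 = (x - 1) / x * (2*R1 - x * (h - H) + A / (C/2))"
    using prefix_ratio_sum_Suc_denom[of k "2*k" "2*k+2", unfolded e xe C_odd]
    unfolding R0_def R1_def A_def by simp
  then have r1: "2*R1 = x / (x - 1) * R0 + x * (h - H) - (q + 1)"
    unfolding double using x by (simp add: field_simps)
  have "(\<Sum>j=0..k+1. real ((2*k+2) choose j) / real ((2*k+2) choose j)) = (\<Sum>j=0..k+1. 1)"
    by (rule sum.cong) (simp_all del: binomial_Suc_Suc)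
  then have "(\<Sum>j=0..k+1. real ((2*k+2) choose j) / real ((2*k+2) choose j)) = x/2 + 1"
    by (simp add: x_def)
  then have "R1 = x / (x + 1) * (2*R2 - (x/2 + 1) + A / C)"
    using prefix_ratio_sum_Suc_denom[of k "2*k+1" "2*k+2", unfolded e xe]
    unfolding R1_def R2_def A_def C_def by simp
  then have r2: "4*R2 = (x + 1) / x * (2*R1) + (x + 2) - (q + 1)"
    unfolding half using x by (simp add: field_simps)
  have "prefix_ratio_sum (k+1) (2*k+2) (2*k+2) = R2 + A / C"
    by (simp add: prefix_ratio_sum_def R2_def A_def C_def)
  then have numer: "prefix_ratio_sum (k+1) (2*k+4) (2*k+2)
      = 4 * (R2 + A / C) - 2 * (real (k+1) + 1) - (real (2*k+2) + 1) * (harm (2*k+3) - harm (k+1))"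
    using prefix_ratio_sum_Suc_Suc_numer[of "k+1" "2*k+2", unfolded e] by simp
  have "2 / x = 1 / (real k + 1)"
    by (simp add: x_def divide_simps)
  then have harm: "harm (2*k+3) = h + 1 / (x + 1)" "harm (k+1) = H + 2 / x"
    using harm_Suc[of "2*k+2", where 'a = real, unfolded e] harm_Suc[of k, where 'a = real]
    by (simp_all add: h_def H_def x_def inverse_eq_divide add.commute)
  have "prefix_ratio_sum (k+1) (2*k+4) (2*k+2)
      = 4*R2 + 2 * (q + 1) - (x + 2) - (x + 1) * (h - H) - 1 + 2 * (x + 1) / x"
  proof -
    have "(x + 1) * (h + 1 / (x + 1) - (H + 2 / x)) = (x + 1) * (h - H) + 1 - 2 * (x + 1) / x"
      using x by (simp add: algebra_simps)
    then show ?thesis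
      unfolding numer xe harm half by (simp add: algebra_simps)
  qed
  also have "\<dots> = (x + 1) / (x - 1) * R0 + (x + 1) / x - q / x"
    unfolding r2 r1 using x by (simp add: field_simps)
  finally have rec: "prefix_ratio_sum (k+1) (2*k+4) (2*k+2) = (x + 1) / (x - 1) * R0 + (x + 1) / x - q / x" .
  have conv: "prefix_ratio_sum (Suc k) (2 * Suc k + 2) (2 * Suc k) = prefix_ratio_sum (k+1) (2*k+4) (2*k+2)"
    "2*real k+3 = x+1" "2*real k+1 = x-1" "2*real k+2 = x"
    by (simp_all add: x_def eval_nat_numeral)
  show ?thesis
    unfolding conv rec R0_def[symmetric] C_def[symmetric] by (simp add: q_def)
qed

lemma prefix_ratio_sum_central:
  "prefix_ratio_sum n (2*n+2) (2*n)
    = (2*real n+1) / 2 * (harm n + 2^(2*n+1) / (real (n+1) * real ((2*n+1) choose (n+1))))"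
proof (induction n)
  case 0
  show ?case by (simp add: prefix_ratio_sum_def harm_def)
next
  case (Suc n)
  define B where "B = real ((2*n+1) choose (n+1))"
  define w where "w = 2^(2*n+1) / (real (n+1) * B)"
  have "B > 0" by (simp add: B_def del: binomial_Suc_Suc)
  have C2: "real ((2*n+2) choose (n+1)) = 2 * B"
    using central_choose_Suc[of n] by (simp add: B_def)
  have last_term: "4^(n+1) / ((2*real n+2) * real ((2*n+2) choose (n+1))) = w / 2"
  proof -
    have "(4::real)^(n+1) / ((2*real n+2) * (2*B)) = (4 * 4^n) / (4 * ((real n+1) * B))"
      by (intro arg_cong2[where f = "(/)"]) (simp_all add: algebra_simps)
    also have "\<dots> = 4^n / ((real n+1) * B)"
      by (rule mult_divide_mult_cancel_left) simp
    also have "\<dots> = w / 2"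
      by (simp add: w_def power_add power_mult)
    finally show ?thesis
      unfolding C2 .
  qed
  have IH: "prefix_ratio_sum n (2*n+2) (2*n) = (2*real n+1) / 2 * (harm n + w)"
    using Suc.IH unfolding w_def B_def .
  have "prefix_ratio_sum (Suc n) (2 * Suc n + 2) (2 * Suc n)
      = (2*real n+3) / (2*real n+1) * ((2*real n+1) / 2 * (harm n + w)) + (2*real n+3) / (2*real n+2) - w / 2"
    unfolding prefix_ratio_sum_central_Suc IH last_term ..
  also have "\<dots> = (2*real n+3) / 2 * (harm n + w) + (2*real n+3) / (2*real n+2) - w / 2"
    by (simp add: add_pos_pos)
  also have "\<dots> = (2*real n+3) / 2 * (harm n + 1 / (real n + 1) + 2 * (real n+1) / (2*real n+3) * w)"
  proof -
    have "(2*real n+3) / 2 * (1 / (real n + 1)) = (2*real n+3) / (2*real n+2)"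
      "(2*real n+3) / 2 * (2 * (real n+1) / (2*real n+3) * w) = (real n + 1) * w"
      by (simp_all add: field_simps)
    then show ?thesis
      by (simp only: distrib_left) (simp add: algebra_simps)
  qed
  also have "2 * (real n+1) / (2*real n+3) * w = 2^(2*(n+1)+1) / (real (n+2) * real ((2*(n+1)+1) choose (n+2)))"
  proof -
    define B' where "B' = real ((2*(n+1)+1) choose (n+2))"
    have "real (Suc (2*n+2)) * real ((2*n+2) choose (n+1)) = real (Suc (2*n+2) choose Suc (n+1)) * real (Suc (n+1))"
      using Suc_times_binomial_eq[of "2*n+2" "n+1"] by (metis of_nat_mult)
    then have B': "real (n+2) * B' = 2 * (2*real n+3) * B"
      unfolding C2 B'_def by (simp add: algebra_simps)
    have w: "2 * (real n+1) / (2*real n+3) * w = 2^(2*n+2) / ((2*real n+3) * B)"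
      using \<open>B > 0\<close> by (simp add: w_def divide_simps power_add)
    show ?thesis
      unfolding B'_def[symmetric] B' w using \<open>B > 0\<close> by (simp add: divide_simps power_add)
  qed
  finally show ?case
    by (simp add: harm_Suc inverse_eq_divide add.commute)
qed

lemma prefix_ratio_sum_pred_denom:
  assumes "m < n"
  shows "prefix_ratio_sum n (2*n+2) (2*n - Suc m)
    = 2 * real (2*n-m) / real (2*n+1-m) * prefix_ratio_sum n (2*n+2) (2*n-m)
      + real (2*n-m) / real (Suc m) * (((2::real)^(2*n+2) * real (Suc m) / real (2*n+1-m)
          - real ((2*n+2) choose (n+1))) / (2 * real ((2*n-m) choose (n+1))) + 1)"
proof -
  define M where "M = 2*n - Suc m"
  define X Y K where "X = real (2*n+1-m)" and "Y = real (2*n-m)" and "K = real (Suc m)"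
  define c d P where "c = real ((2*n+2) choose (n+1))" and "d = real ((2*n-m) choose (n+1))"
    and "P = (2::real)^(2*n+2)"
  define T where "T = (\<Sum>j=0..n. real ((2*n+2) choose j) / real ((2*n-m) choose j))"
  have SucM: "Suc M = 2*n - m" and "n \<le> M"
    using assms by (simp_all add: M_def)
  have "X > 0" "K > 0" "d > 0"
    using assms by (simp_all add: X_def K_def d_def)
  have XY: "real M + 1 = Y" "real M + 2 = X"
    using assms by (simp_all add: M_def X_def Y_def)
  have "- K * T = X - (real n - real m) * (c / d)"
    using sum_choose_div_choose[of n "2*n-m" "2*n+2"] assms by (simp add: T_def X_def K_def c_def d_def)
  moreover have "real n - real m = (X - K) / 2"
    using assms by (simp add: X_def K_def)
  ultimately have T: "T = ((X - K) / 2 * (c / d) - X) / K"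
    using \<open>K > 0\<close> by (simp add: eq_divide_eq algebra_simps)
  have "(2::real)^(2*n+2) = 4^(n+1)"
    using power_mult[of "2::real" 2 "n+1"] by simp
  then have A: "choose_prefix (2*n+2) (Suc n) = (P + c) / 2"
    using choose_prefix_even_half[of "n+1"] by (simp add: P_def c_def algebra_simps)
  have "prefix_ratio_sum n (2*n+2) (2*n - Suc m) = Y / X * (2 * prefix_ratio_sum n (2*n+2) (2*n-m)
      - (T + c / d) + choose_prefix (2*n+2) (Suc n) / d)"
    using prefix_ratio_sum_Suc_denom[OF \<open>n \<le> M\<close>, of "2*n+2", unfolded SucM XY]
    by (simp add: M_def T_def c_def d_def)
  also have "\<dots> = 2 * Y / X * prefix_ratio_sum n (2*n+2) (2*n-m) + Y / K * ((P * K / X - c) / (2 * d) + 1)"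
    unfolding T A using \<open>X > 0\<close> \<open>K > 0\<close> \<open>d > 0\<close> by (simp add: divide_simps) (simp add: algebra_simps)
  finally show ?thesis
    by (simp add: X_def Y_def K_def P_def c_def d_def)
qed

lemma prefix_ratio_sum_closed_form:
  assumes "m \<le> n"
  shows "prefix_ratio_sum n (2*n+2) (2*n-m)
    = 2^m / 2 * real (2*n+1-m) *
      (harm n + 2^(2*n+1) / (real (n+1) * real ((2*n+1) choose (n+1)))
       + (\<Sum>k=1..m. 1 / (2^(k-1) * real k) *
           (((2::real)^(2*n+2) * real k / real (2*n+2-k) - real ((2*n+2) choose (n+1)))
             / (2 * real ((2*n+1-k) choose (n+1))) + 1)))"
  using assms
proof (induction m)
  case 0
  then show ?case
    using prefix_ratio_sum_central[of n] by simp
next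
  case (Suc m)
  then have "m < n" by simp
  define T where "T = harm n + 2^(2*n+1) / (real (n+1) * real ((2*n+1) choose (n+1)))
       + (\<Sum>k=1..m. 1 / (2^(k-1) * real k) *
           (((2::real)^(2*n+2) * real k / real (2*n+2-k) - real ((2*n+2) choose (n+1)))
             / (2 * real ((2*n+1-k) choose (n+1))) + 1))"
  define Z where "Z = ((2::real)^(2*n+2) * real (Suc m) / real (2*n+1-m)
          - real ((2*n+2) choose (n+1))) / (2 * real ((2*n-m) choose (n+1))) + 1"
  have "real (2*n+1-m) > 0"
    using \<open>m < n\<close> by simp
  have IH: "prefix_ratio_sum n (2*n+2) (2*n-m) = 2^m / 2 * real (2*n+1-m) * T"
    using Suc.IH \<open>m < n\<close> unfolding T_def by simp
  have "prefix_ratio_sum n (2*n+2) (2*n - Suc m)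
      = 2 * real (2*n-m) / real (2*n+1-m) * (2^m / 2 * real (2*n+1-m) * T) + real (2*n-m) / real (Suc m) * Z"
    using prefix_ratio_sum_pred_denom[OF \<open>m < n\<close>] unfolding IH Z_def .
  also have "\<dots> = 2^(Suc m) / 2 * real (2*n+1 - Suc m) * (T + 1 / (2^m * real (Suc m)) * Z)"
    using \<open>real (2*n+1-m) > 0\<close> by (simp add: divide_simps) (simp add: algebra_simps)
  finally show ?case
    by (simp add: T_def Z_def)
qed

theorem mainTheorem9:
  fixes n m :: nat
  assumes "m \<le> n"
  shows "(\<Sum>j=0..n. \<Sum>i=0..j. real ((2*n+2) choose i) / real ((2*n-m) choose j))
    = (2::real) powr (real m - 1) * real (2*n+1-m) *
      (harm n + 2^(2*n+1) / (real (n+1) * real ((2*n+1) choose (n+1)))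
       + (\<Sum>k=1..m. 1 / (2^(k-1) * real k) *
           (((2::real)^(2*n+2) * real k / real (2*n+2-k) - real ((2*n+2) choose (n+1)))
             / (2 * real ((2*n+1-k) choose (n+1))) + 1)))"
proof -
  have lhs: "(\<Sum>j=0..n. \<Sum>i=0..j. real ((2*n+2) choose i) / real ((2*n-m) choose j))
      = prefix_ratio_sum n (2*n+2) (2*n-m)"
    unfolding prefix_ratio_sum_def choose_prefix_def by (simp add: sum_divide_distrib)
  have pow: "(2::real) powr (real m - 1) = 2^m / 2"
    by (simp add: powr_diff powr_realpow)
  show ?thesis
    unfolding lhs pow prefix_ratio_sum_closed_form[OF assms] ..
qed

end
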